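(* For every $x\in\mathbb R\setminus\{0\}$, $$\exp\Big(\frac{x^2}2-\frac{x^4}{12}\Big)<\cosh(x)<\Big(1+\frac{x^2}3\Big)\exp\Big(\frac{x^2}6\Big).$$ *)

theory Defs
  imports Complex_Main
begin

end

theory Submission
  imports Defs
begin

text \<open>
  All three functions are even, so let \<open>x > 0\<close>. Taking logarithms, both inequalities compare
  \<open>ln (cosh x)\<close> with functions that agree with it at \<open>0\<close>, so it suffices to compare derivatives,
  i.e. to bound \<open>tanh x\<close> between \<open>x - x\<^sup>3/3\<close> and the Pade approximant \<open>x (9 + x\<^sup>2) / (3 (3 + x\<^sup>2))\<close>.
  After clearing \<open>cosh x\<close>, each of these bounds is again an inequality between functions vanishing
  at \<open>0\<close>, whose derivatives are compared the same way, ending in \<open>x sinh x > 0\<close>.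
\<close>

lemma less_by_pos_deriv:
  fixes f f' :: "real \<Rightarrow> real"
  assumes "a < b"
    and "\<And>t. (f has_real_derivative f' t) (at t)"
    and "\<And>t. a < t \<Longrightarrow> t < b \<Longrightarrow> f' t > 0"
  shows "f a < f b"
proof (rule DERIV_pos_imp_increasing_open[OF \<open>a < b\<close>])
  show "continuous_on {a..b} f"
    using assms(2) by (meson DERIV_continuous continuous_at_imp_continuous_on)
qed (use assms(2,3) in blast)

lemma sinh_less_mult_cosh:
  fixes x :: real
  assumes "x > 0"
  shows "sinh x < x * cosh x"
proof -
  have "0 * cosh 0 - sinh 0 < x * cosh x - sinh x"
    by (rule less_by_pos_deriv[where f' = "\<lambda>t. t * sinh t", OF assms])
      (auto intro!: derivative_eq_intros)
  then show ?thesis by simp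
qed

lemma tanh_gt_cubic:
  fixes x :: real
  assumes "x > 0"
  shows "x - x^3 / 3 < tanh x"
proof -
  have "sinh 0 - (0 - 0^3/3) * cosh 0 < sinh x - (x - x^3/3) * cosh (x::real)"
  proof (rule less_by_pos_deriv[OF assms])
    fix t :: real
    show "((\<lambda>t. sinh t - (t - t^3/3) * cosh t) has_real_derivative
        t * (t * cosh t - sinh t) + t^3/3 * sinh t) (at t)"
      by (auto intro!: derivative_eq_intros simp: algebra_simps power2_eq_square power3_eq_cube)
  next
    fix t :: real
    assume "0 < t"
    then show "t * (t * cosh t - sinh t) + t^3/3 * sinh t > 0"
      using sinh_less_mult_cosh[of t] by (intro add_pos_pos mult_pos_pos) auto
  qed
  then show ?thesis by (simp add: tanh_def field_simps)
qed

lemma tanh_less_pade: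
  fixes x :: real
  assumes "x > 0"
  shows "tanh x < x * (9 + x^2) / (3 * (3 + x^2))"
proof -
  have "0 * (9 + 0^2) * cosh 0 - 3 * (3 + 0^2) * sinh 0
      < x * (9 + x^2) * cosh x - 3 * (3 + x^2) * sinh (x::real)"
  proof (rule less_by_pos_deriv[OF assms])
    fix t :: real
    show "((\<lambda>t. t * (9 + t^2) * cosh t - 3 * (3 + t^2) * sinh t) has_real_derivative
        t * (3 + t^2) * sinh t) (at t)"
      by (auto intro!: derivative_eq_intros simp: algebra_simps power2_eq_square power3_eq_cube)
  qed (auto intro!: mult_pos_pos add_pos_nonneg)
  then show ?thesis
    by (simp add: tanh_def field_simps add_pos_nonneg)
qed

lemma ln_cosh_gt:
  fixes x :: real
  assumes "x > 0"
  shows "x^2 / 2 - x^4 / 12 < ln (cosh x)"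
proof -
  have "ln (cosh 0) - (0^2/2 - 0^4/12) < ln (cosh x) - (x^2/2 - x^4/12 :: real)"
  proof (rule less_by_pos_deriv[OF assms])
    fix t :: real
    show "((\<lambda>t. ln (cosh t) - (t^2/2 - t^4/12)) has_real_derivative tanh t - (t - t^3/3)) (at t)"
      by (auto intro!: derivative_eq_intros
          simp: tanh_def algebra_simps power2_eq_square power3_eq_cube)
  qed (use tanh_gt_cubic in auto)
  then show ?thesis by simp
qed

lemma ln_cosh_less:
  fixes x :: real
  assumes "x > 0"
  shows "ln (cosh x) < ln (1 + x^2 / 3) + x^2 / 6"
proof -
  have "ln (1 + 0^2/3) + 0^2/6 - ln (cosh 0)
      < ln (1 + x^2/3) + x^2/6 - ln (cosh (x::real))"
  proof (rule less_by_pos_deriv[OF assms])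
    fix t :: real
    have pos: "1 + t^2/3 > 0" by (simp add: add_pos_nonneg)
    have "((\<lambda>t. ln (1 + t^2/3) + t^2/6 - ln (cosh t)) has_real_derivative
        (2*t/3) / (1 + t^2/3) + 2*t/6 - tanh t) (at t)"
      using pos by (auto intro!: derivative_eq_intros simp: tanh_def power2_eq_square)
    moreover have "(2*t/3) / (1 + t^2/3) + 2*t/6 = t * (9 + t^2) / (3 * (3 + t^2))"
      using pos by (simp add: field_simps power2_eq_square)
    ultimately show "((\<lambda>t. ln (1 + t^2/3) + t^2/6 - ln (cosh t)) has_real_derivative
        t * (9 + t^2) / (3 * (3 + t^2)) - tanh t) (at t)"
      by simp
  qed (use tanh_less_pade in auto)
  then show ?thesis by simp
qed

theorem lemma2p2:
  fixes x :: real
  assumes "x \<noteq> 0"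
  shows "exp (x^2 / 2 - x^4 / 12) < cosh x \<and> cosh x < (1 + x^2 / 3) * exp (x^2 / 6)"
proof -
  define y where "y = \<bar>x\<bar>"
  have "y > 0" using assms by (simp add: y_def)
  have even: "x^2 = y^2" "x^4 = y^4" "cosh x = cosh y"
    by (simp_all add: y_def abs_if)
  have "exp (y^2/2 - y^4/12) < exp (ln (cosh y))"
    using ln_cosh_gt[OF \<open>y > 0\<close>] by (simp only: exp_less_cancel_iff)
  moreover have "exp (ln (cosh y)) < exp (ln (1 + y^2/3) + y^2/6)"
    using ln_cosh_less[OF \<open>y > 0\<close>] by (simp only: exp_less_cancel_iff)
  moreover have "1 + y^2/3 > 0" by (simp add: add_pos_nonneg)
  ultimately show ?thesis
    by (simp add: even exp_add)
qed

end
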